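(* Let $k^{*}\ge2$, let $\boldsymbol\beta^\star_1,\ldots,\boldsymbol\beta^\star_{k^{*}}\in\mathbb{R}^d$ be distinct, $r>0$, $\Delta_{\max}:=\max_{i,j}\|\boldsymbol\beta^\star_i-\boldsymbol\beta^\star_j\|$, $\Delta_{\min}:=\min_{i\ne j}\|\boldsymbol\beta^\star_i-\boldsymbol\beta^\star_j\|$, and assume $\Delta_{\min}/r\ge30$. Let $\mathbf{x}_1,\ldots,\mathbf{x}_n$ be generated independently from the stochastic ball mixture model with these centers and radius $r$. If $\boldsymbol\beta\in(\mathbb{R}^d)^{k^{*}}$ is a non-degenerate local minimum of $G_n$, then $G_n(\boldsymbol\beta)\le 4\Delta_{\max}^2$.
   Context: The stochastic ball mixture model has density $f^*=\frac{1}{k^{*}}\sum_{s=1}^{k^{*}}f^*_s$, with $f^*_s$ the uniform density on the Euclidean ball of radius $r$ centered at $\boldsymbol\beta^\star_s$. The empirical $k$-means objective is $G_n(\boldsymbol\beta)=\frac1n\sum_{t=1}^n\min_{j\in[k^{*}]}\|\mathbf{x}_t-\boldsymbol\beta_j\|^2$ for $\boldsymbol\beta=(\boldsymbol\beta_1,\ldots,\boldsymbol\beta_{k^{*}})$. A solution $\boldsymbol\beta$ is non-degenerate if every fitted cluster (the set of data points closest to $\boldsymbol\beta_i$) is nonempty. *)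

theory Defs
  imports "HOL-Probability.Probability"
begin

text \<open>Centers, candidate solutions and data are indexed by natural numbers:
  centers/solution components by 0..<K (K = k*), data points by 0..<n.\<close>

definition ball_mixture :: "nat \<Rightarrow> (nat \<Rightarrow> 'a::euclidean_space) \<Rightarrow> real \<Rightarrow> 'a measure" where
  "ball_mixture K c r = density lborel
     (\<lambda>x. ennreal ((1 / real K) *
        (\<Sum>s<K. indicator (ball (c s) r) x / measure lborel (ball (c s) r))))"

definition Gn :: "nat \<Rightarrow> nat \<Rightarrow> (nat \<Rightarrow> 'a::euclidean_space) \<Rightarrow> (nat \<Rightarrow> 'a) \<Rightarrow> real" where
  "Gn n K xs \<beta> = (1 / real n) * (\<Sum>t<n. Min ((\<lambda>j. (norm (xs t - \<beta> j))^2) ` {..<K}))"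

definition fitted_cluster :: "nat \<Rightarrow> nat \<Rightarrow> (nat \<Rightarrow> 'a::euclidean_space) \<Rightarrow> (nat \<Rightarrow> 'a) \<Rightarrow> nat \<Rightarrow> nat set" where
  "fitted_cluster n K xs \<beta> i = {t. t < n \<and> (\<forall>j<K. norm (xs t - \<beta> i) \<le> norm (xs t - \<beta> j))}"

definition non_degenerate :: "nat \<Rightarrow> nat \<Rightarrow> (nat \<Rightarrow> 'a::euclidean_space) \<Rightarrow> (nat \<Rightarrow> 'a) \<Rightarrow> bool" where
  "non_degenerate n K xs \<beta> \<longleftrightarrow> (\<forall>i<K. fitted_cluster n K xs \<beta> i \<noteq> {})"

definition local_min_Gn :: "nat \<Rightarrow> nat \<Rightarrow> (nat \<Rightarrow> 'a::euclidean_space) \<Rightarrow> (nat \<Rightarrow> 'a) \<Rightarrow> bool" where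
  "local_min_Gn n K xs \<beta> \<longleftrightarrow>
     (\<exists>\<epsilon>>0. \<forall>\<beta>'. (\<forall>j<K. dist (\<beta>' j) (\<beta> j) < \<epsilon>) \<longrightarrow> Gn n K xs \<beta> \<le> Gn n K xs \<beta>')"

definition Delta_max :: "nat \<Rightarrow> (nat \<Rightarrow> 'a::euclidean_space) \<Rightarrow> real" where
  "Delta_max K c = Max {norm (c i - c j) | i j. i < K \<and> j < K}"

definition Delta_min :: "nat \<Rightarrow> (nat \<Rightarrow> 'a::euclidean_space) \<Rightarrow> real" where
  "Delta_min K c = Min {norm (c i - c j) | i j. i < K \<and> j < K \<and> i \<noteq> j}"

end

theory Submission
  imports Defs
begin

text \<open>Almost surely every data point lies in one of the balls, so any two data points are
  at distance at most R = Delta_max + 2r. Hence the intersection C of the closed balls of radius R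
  around the data points is a closed convex set containing all data. At a non-degenerate
  local minimum every fitted center lies in C: otherwise moving it slightly towards its
  projection onto C brings it strictly closer to every data point, which strictly lowers
  the loss of the (nonempty) cluster it serves and does not raise any other loss. A center
  in C is within R of every data point, so G_n \<le> R^2 \<le> (2 Delta_max)^2, using
  2r \<le> Delta_min \<le> Delta_max.\<close>

definition ball_mixture_density :: "nat \<Rightarrow> (nat \<Rightarrow> 'a::euclidean_space) \<Rightarrow> real \<Rightarrow> 'a \<Rightarrow> real" where
  "ball_mixture_density K c r x =
     (1 / real K) * (\<Sum>s<K. indicator (ball (c s) r) x / measure lborel (ball (c s) r))"

lemma ball_mixture_eq_density:
  "ball_mixture K c r = density lborel (\<lambda>x. ennreal (ball_mixture_density K c r x))"
  unfolding ball_mixture_def ball_mixture_density_def ..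

lemma ball_mixture_density_nonneg: "0 \<le> ball_mixture_density K c r x"
  unfolding ball_mixture_density_def by (intro mult_nonneg_nonneg sum_nonneg divide_nonneg_nonneg) auto

lemma integrable_indicator_ball_divide:
  fixes c :: "'a::euclidean_space" and m :: real
  shows "integrable lborel (\<lambda>x. indicator (ball c r) x / m)"
  by (intro integrable_divide_zero integrable_real_indicator emeasure_lborel_ball_finite) simp

lemma integrable_ball_mixture_density: "integrable lborel (ball_mixture_density K c r)"
  unfolding ball_mixture_density_def
  by (intro integrable_mult_right Bochner_Integration.integrable_sum integrable_indicator_ball_divide)

lemma borel_measurable_ball_mixture_density:
  "(\<lambda>x. ennreal (ball_mixture_density K c r x)) \<in> borel_measurable lborel"
  using borel_measurable_integrable[OF integrable_ball_mixture_density] by measurable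

lemma measure_lborel_ball_pos:
  fixes c :: "'a::euclidean_space"
  assumes "r > 0"
  shows "measure lborel (ball c r) > 0"
  using content_ball_pos[OF assms, of c] by (simp add: measure_completion)

lemma integral_ball_mixture_density:
  assumes "K > 0" "r > 0"
  shows "integral\<^sup>L lborel (ball_mixture_density K c r) = 1"
proof -
  have "integral\<^sup>L lborel (ball_mixture_density K c r) =
        (1 / real K) * (\<Sum>s<K. measure lborel (ball (c s) r) / measure lborel (ball (c s) r))"
    unfolding ball_mixture_density_def
    by (simp add: Bochner_Integration.integral_sum integrable_indicator_ball_divide)
  also have "\<dots> = 1"
    using measure_lborel_ball_pos[OF assms(2)] assms(1) by simp
  finally show ?thesis .
qed

lemma prob_space_ball_mixture:
  assumes "K > 0" "r > 0"
  shows "prob_space (ball_mixture K c r)"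
proof (rule prob_spaceI)
  have "emeasure (ball_mixture K c r) (space (ball_mixture K c r)) =
        (\<integral>\<^sup>+ x. ennreal (ball_mixture_density K c r x) \<partial>lborel)"
    unfolding ball_mixture_eq_density
    using emeasure_density[OF borel_measurable_ball_mixture_density, of UNIV] by simp
  also have "\<dots> = ennreal (integral\<^sup>L lborel (ball_mixture_density K c r))"
    by (intro nn_integral_eq_integral integrable_ball_mixture_density AE_I2 ball_mixture_density_nonneg)
  finally show "emeasure (ball_mixture K c r) (space (ball_mixture K c r)) = 1"
    using integral_ball_mixture_density[OF assms] by simp
qed

lemma AE_ball_mixture_in_balls:
  "AE x in ball_mixture K c r. \<exists>s<K. x \<in> ball (c s) r"
proof -
  have "ball_mixture_density K c r x = 0" if "\<not> (\<exists>s<K. x \<in> ball (c s) r)" for x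
    using that unfolding ball_mixture_density_def by (simp add: indicator_def)
  then show ?thesis
    unfolding ball_mixture_eq_density
    by (subst AE_density[OF borel_measurable_ball_mixture_density]) (rule AE_I2, force)
qed

lemma finite_center_distances:
  fixes c :: "nat \<Rightarrow> 'a::real_normed_vector"
  shows "finite {norm (c i - c j) | i j. i < K \<and> j < K \<and> P i j}"
proof (rule finite_subset)
  show "{norm (c i - c j) | i j. i < K \<and> j < K \<and> P i j} \<subseteq>
        (\<lambda>(i, j). norm (c i - c j)) ` ({..<K} \<times> {..<K})"
    by auto
qed simp

lemma norm_diff_le_Delta_max:
  assumes "i < K" "j < K"
  shows "norm (c i - c j) \<le> Delta_max K c"
  unfolding Delta_max_def using assms finite_center_distances[of c K "\<lambda>_ _. True"]
  by (intro Max_ge) auto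

lemma Delta_min_le_Delta_max:
  assumes "K \<ge> 2"
  shows "Delta_min K c \<le> Delta_max K c"
proof -
  have "Delta_min K c \<le> norm (c 0 - c 1)"
    unfolding Delta_min_def using assms finite_center_distances[of c K "\<lambda>i j. i \<noteq> j"]
    by (intro Min_le) force+
  also have "\<dots> \<le> Delta_max K c"
    using assms by (intro norm_diff_le_Delta_max) auto
  finally show ?thesis .
qed

lemma dist_le_Delta_max_plus_radii:
  assumes "s < K" "s' < K" "x \<in> ball (c s) r" "y \<in> ball (c s') r"
  shows "dist x y \<le> Delta_max K c + 2 * r"
proof -
  have "dist x y \<le> dist x (c s) + dist (c s) (c s') + dist (c s') y"
    by (metis dist_triangle add.commute add_le_cancel_left order_trans)
  moreover have "dist (c s) (c s') \<le> Delta_max K c"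
    using norm_diff_le_Delta_max[OF assms(1,2)] by (simp add: dist_norm)
  ultimately show ?thesis
    using assms(3,4) by (simp add: dist_commute)
qed

lemma dist_closer_on_segment_to_closest_point:
  fixes b x z :: "'a::euclidean_space"
  assumes "convex C" "closed C" "x \<in> C" "z \<in> open_segment b (closest_point C b)"
  shows "dist x z < dist x b"
proof -
  have "dist x (closest_point C b) \<le> dist x b"
    using closest_point_lipschitz[OF assms(1,2), of x b] assms(3) by (auto simp: closest_point_self)
  then show ?thesis
    using dist_decreases_open_segment[OF assms(4), of x] by linarith
qed

lemma Min_image_mono:
  fixes f g :: "'b \<Rightarrow> 'c::linorder"
  assumes "finite A" "A \<noteq> {}" "\<And>j. j \<in> A \<Longrightarrow> g j \<le> f j"
  shows "Min (g ` A) \<le> Min (f ` A)"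
  using assms by (auto simp: Min_le_iff intro: order_trans)

lemma Gn_update_less:
  fixes xs \<beta> :: "nat \<Rightarrow> 'a::euclidean_space"
  assumes "i < K" "t0 \<in> fitted_cluster n K xs \<beta> i"
    and "\<And>t. t < n \<Longrightarrow> norm (xs t - z) \<le> norm (xs t - \<beta> i)"
    and "norm (xs t0 - z) < norm (xs t0 - \<beta> i)"
  shows "Gn n K xs (\<beta>(i := z)) < Gn n K xs \<beta>"
proof -
  let ?loss = "\<lambda>\<gamma> t. Min ((\<lambda>j. (norm (xs t - \<gamma> j))\<^sup>2) ` {..<K})"
  have t0: "t0 < n" "\<And>j. j < K \<Longrightarrow> norm (xs t0 - \<beta> i) \<le> norm (xs t0 - \<beta> j)"
    using assms(2) unfolding fitted_cluster_def by auto
  have le: "?loss (\<beta>(i := z)) t \<le> ?loss \<beta> t" if "t < n" for t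
    using assms(1) assms(3)[OF that] by (intro Min_image_mono) (auto intro: power_mono)
  have "?loss (\<beta>(i := z)) t0 \<le> (norm (xs t0 - z))\<^sup>2"
    using assms(1) by (intro Min_le) (auto simp: image_iff)
  also have "\<dots> < (norm (xs t0 - \<beta> i))\<^sup>2"
    using assms(4) by (simp add: power_strict_mono)
  also have "\<dots> = ?loss \<beta> t0"
    using assms(1) t0(2) by (intro Min_eqI[symmetric]) (auto intro: power_mono)
  finally have "(\<Sum>t<n. ?loss (\<beta>(i := z)) t) < (\<Sum>t<n. ?loss \<beta> t)"
    using le t0(1) by (intro sum_strict_mono_ex1) auto
  then show ?thesis
    using t0(1) unfolding Gn_def by (intro mult_strict_left_mono) auto
qed

lemma local_min_center_in_convex:
  fixes xs \<beta> :: "nat \<Rightarrow> 'a::euclidean_space"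
  assumes "convex C" "closed C" "\<And>t. t < n \<Longrightarrow> xs t \<in> C"
    and "local_min_Gn n K xs \<beta>" "non_degenerate n K xs \<beta>" "i < K"
  shows "\<beta> i \<in> C"
proof (rule ccontr)
  assume notin: "\<beta> i \<notin> C"
  obtain t0 where t0: "t0 \<in> fitted_cluster n K xs \<beta> i"
    using assms(5,6) unfolding non_degenerate_def by blast
  then have "C \<noteq> {}"
    using assms(3) unfolding fitted_cluster_def by blast
  define p where "p = closest_point C (\<beta> i)"
  have "p \<noteq> \<beta> i"
    using closest_point_in_set[OF assms(2) \<open>C \<noteq> {}\<close>] notin unfolding p_def by metis
  then have "\<beta> i \<in> closure (open_segment (\<beta> i) p)"
    by simp
  obtain e where "e > 0"
    and e: "\<And>\<beta>'. (\<forall>j<K. dist (\<beta>' j) (\<beta> j) < e) \<Longrightarrow> Gn n K xs \<beta> \<le> Gn n K xs \<beta>'"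
    using assms(4) unfolding local_min_Gn_def by blast
  obtain z where z: "z \<in> open_segment (\<beta> i) p" "dist z (\<beta> i) < e"
    using closure_approachable \<open>\<beta> i \<in> closure (open_segment (\<beta> i) p)\<close> \<open>e > 0\<close> by blast
  have closer: "dist (xs t) z < dist (xs t) (\<beta> i)" if "t < n" for t
    using dist_closer_on_segment_to_closest_point[OF assms(1,2) assms(3)[OF that]] z(1)
    unfolding p_def by blast
  have "Gn n K xs (\<beta>(i := z)) < Gn n K xs \<beta>"
    using closer t0 unfolding fitted_cluster_def
    by (intro Gn_update_less[OF assms(6) t0]) (auto simp: dist_norm less_imp_le)
  moreover have "Gn n K xs \<beta> \<le> Gn n K xs (\<beta>(i := z))"
    using z(2) \<open>e > 0\<close> by (intro e) auto
  ultimately show False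
    by simp
qed

lemma Gn_le_if_center_within:
  assumes "j < K" "\<And>t. t < n \<Longrightarrow> dist (xs t) (\<beta> j) \<le> R"
  shows "Gn n K xs \<beta> \<le> R\<^sup>2"
proof -
  have "Min ((\<lambda>j. (norm (xs t - \<beta> j))\<^sup>2) ` {..<K}) \<le> R\<^sup>2" if "t < n" for t
  proof -
    have "Min ((\<lambda>j. (norm (xs t - \<beta> j))\<^sup>2) ` {..<K}) \<le> (norm (xs t - \<beta> j))\<^sup>2"
      using assms(1) by (intro Min_le) auto
    also have "\<dots> \<le> R\<^sup>2"
      using assms(2)[OF that] by (intro power_mono) (auto simp: dist_norm)
    finally show ?thesis .
  qed
  then have "Gn n K xs \<beta> \<le> (1 / real n) * (\<Sum>t<n. R\<^sup>2)"
    unfolding Gn_def by (intro mult_left_mono sum_mono) auto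
  then show ?thesis
    by (cases "n = 0") (auto simp: Gn_def)
qed

theorem mainTheorem3:
  fixes c :: "nat \<Rightarrow> 'a::euclidean_space" and K n :: nat and r :: real
  assumes "K \<ge> 2"
    and "inj_on c {..<K}"
    and "r > 0"
    and "Delta_min K c / r \<ge> 30"
  shows "AE xs in PiM {..<n} (\<lambda>_. ball_mixture K c r).
           \<forall>\<beta>. local_min_Gn n K xs \<beta> \<and> non_degenerate n K xs \<beta>
                \<longrightarrow> Gn n K xs \<beta> \<le> 4 * (Delta_max K c)^2"
proof -
  define R where "R = Delta_max K c + 2 * r"
  have "2 * r \<le> Delta_max K c"
    using assms(3,4) Delta_min_le_Delta_max[OF assms(1), of c] by (simp add: field_simps)
  then have R_sq: "R\<^sup>2 \<le> 4 * (Delta_max K c)\<^sup>2"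
    using power_mono[of R "2 * Delta_max K c" 2] assms(3) unfolding R_def
    by (simp add: power_mult_distrib)
  have "prob_space (ball_mixture K c r)"
    using assms(1,3) by (intro prob_space_ball_mixture) auto
  then have "AE xs in PiM {..<n} (\<lambda>_. ball_mixture K c r). \<forall>t\<in>{..<n}. \<exists>s<K. xs t \<in> ball (c s) r"
    by (intro AE_finite_allI AE_PiM_component AE_ball_mixture_in_balls) simp_all
  moreover have "Gn n K xs \<beta> \<le> 4 * (Delta_max K c)\<^sup>2"
    if in_balls: "\<forall>t\<in>{..<n}. \<exists>s<K. xs t \<in> ball (c s) r"
      and "local_min_Gn n K xs \<beta>" "non_degenerate n K xs \<beta>" for xs \<beta>
  proof -
    have "dist (xs t) (xs t') \<le> R" if "t < n" "t' < n" for t t'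
      using in_balls that unfolding R_def by (metis dist_le_Delta_max_plus_radii lessThan_iff)
    then have "\<beta> 0 \<in> (\<Inter>t\<in>{..<n}. cball (xs t) R)"
      using assms(1) \<open>local_min_Gn n K xs \<beta>\<close> \<open>non_degenerate n K xs \<beta>\<close>
      by (intro local_min_center_in_convex convex_INT closed_INT) auto
    then have "Gn n K xs \<beta> \<le> R\<^sup>2"
      using assms(1) by (intro Gn_le_if_center_within[of 0]) auto
    with R_sq show ?thesis by linarith
  qed
  ultimately show ?thesis
    by (auto elim: AE_mp)
qed

end
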